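(* Let $d\ge3$ be odd and $n>2$. Then the following statement is false: "for every $A\in\mathrm{Hull}(\Lambda_{d-1}(d,n))$ we have $\operatorname{Per}(A)\ge(n!/n^n)^{d-1}$, with equality if and only if $A=n^{1-d}J_n^d$." That is, there exists $A\in\mathrm{Hull}(\Lambda_{d-1}(d,n))$ such that either $\operatorname{Per}(A)<(n!/n^n)^{d-1}$, or $\operatorname{Per}(A)=(n!/n^n)^{d-1}$ and $A\ne n^{1-d}J_n^d$.
   Context: Let $I_n=\{1,\dots,n\}$. A $d$-dimensional matrix of order $n$ is a function $I_n^d\to\mathbb R$. A $(d-1)$-plane (hyperplane) is the set of positions with one coordinate fixed. $\Lambda_{d-1}(d,n)$ is the set of $(0,1)$-valued $d$-dimensional matrices of order $n$ with exactly one $1$ in each hyperplane. $\mathrm{Hull}(X)$ denotes the convex hull of $X$. A diagonal is a selection of $n$ positions any two of which differ in every coordinate; $\operatorname{Per}(A)$ is the sum over diagonals of the product of the entries on the diagonal. $J_n^d$ is the $d$-dimensional matrix of order $n$ with all entries $1$. *)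

theory Defs
  imports Complex_Main
begin

text \<open>Positions of a d-dimensional matrix of order n: index tuples (i_1,...,i_d) with
  1 \<le> i_k \<le> n, represented as lists of length d (coordinate k is xs ! k, k < d).
  A d-dimensional matrix of order n is a function on these positions; we represent it as
  a function nat list \<Rightarrow> real, only its values on positions being relevant.\<close>

definition positions :: "nat \<Rightarrow> nat \<Rightarrow> nat list set" where
  "positions d n = {xs. length xs = d \<and> set xs \<subseteq> {1..n}}"

definition is_matrix :: "nat \<Rightarrow> nat \<Rightarrow> (nat list \<Rightarrow> real) \<Rightarrow> bool" where
  "is_matrix d n A \<longleftrightarrow> (\<forall>xs. xs \<notin> positions d n \<longrightarrow> A xs = 0)"

definition hyperplane :: "nat \<Rightarrow> nat \<Rightarrow> nat \<Rightarrow> nat \<Rightarrow> nat list set" where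
  "hyperplane d n k j = {xs \<in> positions d n. xs ! k = j}"

definition Lambda :: "nat \<Rightarrow> nat \<Rightarrow> (nat list \<Rightarrow> real) set" where
  "Lambda d n = {A. is_matrix d n A \<and> (\<forall>xs. A xs \<in> {0, 1}) \<and>
      (\<forall>k<d. \<forall>j\<in>{1..n}. card {xs \<in> hyperplane d n k j. A xs = 1} = 1)}"

text \<open>Convex hull, as the set of finite convex combinations (Lambda d n is finite).\<close>
definition Hull :: "(nat list \<Rightarrow> real) set \<Rightarrow> (nat list \<Rightarrow> real) set" where
  "Hull X = {A. \<exists>S w. finite S \<and> S \<subseteq> X \<and> (\<forall>L\<in>S. w L \<ge> 0) \<and> (\<Sum>L\<in>S. w L) = 1 \<and>
                  A = (\<lambda>xs. \<Sum>L\<in>S. w L * L xs)}"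

definition diagonals :: "nat \<Rightarrow> nat \<Rightarrow> nat list set set" where
  "diagonals d n = {D. D \<subseteq> positions d n \<and> card D = n \<and>
      (\<forall>x\<in>D. \<forall>y\<in>D. x \<noteq> y \<longrightarrow> (\<forall>k<d. x ! k \<noteq> y ! k))}"

definition Per :: "nat \<Rightarrow> nat \<Rightarrow> (nat list \<Rightarrow> real) \<Rightarrow> real" where
  "Per d n A = (\<Sum>D\<in>diagonals d n. \<Prod>x\<in>D. A x)"

definition J :: "nat \<Rightarrow> nat \<Rightarrow> nat list \<Rightarrow> real" where
  "J d n = (\<lambda>xs. if xs \<in> positions d n then 1 else 0)"

end

theory Submission
  imports Defs "HOL-Combinatorics.Permutations" "HOL-Number_Theory.Cong"
begin

(* Put u = n^(1-d) and let E be the checkerboard tensor, the product over all coordinates of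
   c(x_k) with c(1) = 1, c(2) = -1 and c = 0 elsewhere.  E is a combination of permutation
   matrices (members of Lambda) with coefficient sum 0, and u J is the average of the n^(d-1)
   cyclic shifts of any permutation matrix; hence u J + eps E lies in the hull for small |eps|.
   A diagonal meets the support {1,2}^d of E in at most two points, and two such points differ
   in every coordinate, so E takes opposite values on them because d is odd.  Therefore
   Per (u J + eps E) = N u^n + eps u^(n-1) S - eps^2 u^(n-2) M, where N <= (n!)^(d-1) is the
   number of diagonals and M >= 1 because of the main diagonal.  Choosing the sign of eps with
   eps S <= 0 gives Per (u J + eps E) < (n!/n^n)^(d-1). *)

lemma of_bool_Ball_eq_prod:
  "finite K \<Longrightarrow> (of_bool (\<forall>k\<in>K. P k) :: real) = (\<Prod>k\<in>K. of_bool (P k))"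
  by (induction K rule: finite_induct) (auto simp: prod_zero_iff)

lemma inj_on_card_eq_imp_bij_betw:
  assumes "inj_on f A" "f ` A \<subseteq> B" "finite B" "card A = card B"
  shows "bij_betw f A B"
  using assms card_image card_subset_eq unfolding bij_betw_def by metis

lemma nth_in_positions: "xs \<in> positions d n \<Longrightarrow> k < d \<Longrightarrow> xs ! k \<in> {1..n}"
  unfolding positions_def using nth_mem by blast

lemma finite_positions: "finite (positions d n)"
proof -
  have "positions d n = {xs. set xs \<subseteq> {1..n} \<and> length xs = d}"
    unfolding positions_def by auto
  then show ?thesis using finite_lists_length_eq[of "{1..n}" d] by simp
qed

lemma Hull_finite_combination:
  fixes c :: "'i \<Rightarrow> real" and L :: "'i \<Rightarrow> nat list \<Rightarrow> real"
  assumes "finite I" "\<And>i. i \<in> I \<Longrightarrow> c i \<ge> 0" "(\<Sum>i\<in>I. c i) = 1" "\<And>i. i \<in> I \<Longrightarrow> L i \<in> X"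
  shows "(\<lambda>xs. \<Sum>i\<in>I. c i * L i xs) \<in> Hull X"
proof -
  define w where "w M = (\<Sum>i\<in>{i\<in>I. L i = M}. c i)" for M
  have "(\<Sum>i\<in>I. c i * L i xs) = (\<Sum>M\<in>L ` I. w M * M xs)" for xs
  proof -
    have "(\<Sum>i\<in>I. c i * L i xs) = (\<Sum>M\<in>L ` I. \<Sum>i\<in>{i\<in>I. L i = M}. c i * L i xs)"
      using sum.image_gen[OF assms(1), of "\<lambda>i. c i * L i xs" L] by simp
    also have "\<dots> = (\<Sum>M\<in>L ` I. w M * M xs)"
      unfolding w_def sum_distrib_right by (rule sum.cong) (auto intro!: sum.cong)
    finally show ?thesis .
  qed
  moreover have "\<forall>M\<in>L ` I. w M \<ge> 0"
    unfolding w_def by (auto intro!: sum_nonneg assms(2))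
  moreover have "(\<Sum>M\<in>L ` I. w M) = 1"
    unfolding w_def using sum.image_gen[OF assms(1), of c L] assms(3) by simp
  ultimately show ?thesis
    unfolding Hull_def using assms(1,4) by blast
qed

section \<open>Permutation matrices and the hull of Lambda\<close>

definition perm_matrix :: "nat \<Rightarrow> nat \<Rightarrow> (nat \<Rightarrow> nat \<Rightarrow> nat) \<Rightarrow> nat list \<Rightarrow> real" where
  "perm_matrix d n f xs = of_bool (xs \<in> positions d n \<and> (\<forall>k\<in>{1..<d}. xs ! k = f k (xs ! 0)))"

definition graph_point :: "nat \<Rightarrow> (nat \<Rightarrow> nat \<Rightarrow> nat) \<Rightarrow> nat \<Rightarrow> nat list" where
  "graph_point d f i = map (\<lambda>k. if k = 0 then i else f k i) [0..<d]"

lemma graph_point_nth: "k < d \<Longrightarrow> graph_point d f i ! k = (if k = 0 then i else f k i)"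
  unfolding graph_point_def by simp

lemma graph_point_in_positions:
  assumes "i \<in> {1..n}" and maps: "\<And>k. k \<in> {1..<d} \<Longrightarrow> f k ` {1..n} \<subseteq> {1..n}"
  shows "graph_point d f i \<in> positions d n"
proof -
  have "f k i \<in> {1..n}" if "k \<in> {1..<d}" for k
    using maps[OF that] assms(1) by blast
  then show ?thesis
    using assms(1) unfolding positions_def graph_point_def by auto
qed

lemma perm_matrix_eq_1_iff:
  assumes "d \<ge> 1" and maps: "\<And>k. k \<in> {1..<d} \<Longrightarrow> f k ` {1..n} \<subseteq> {1..n}"
  shows "perm_matrix d n f xs = 1 \<longleftrightarrow> (\<exists>i\<in>{1..n}. xs = graph_point d f i)"
proof
  assume "perm_matrix d n f xs = 1"
  then have xs: "xs \<in> positions d n" "\<forall>k\<in>{1..<d}. xs ! k = f k (xs ! 0)"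
    unfolding perm_matrix_def by (auto split: if_splits)
  then have "xs = graph_point d f (xs ! 0)"
    by (intro nth_equalityI) (auto simp: graph_point_def positions_def)
  then show "\<exists>i\<in>{1..n}. xs = graph_point d f i"
    using nth_in_positions[OF xs(1)] \<open>d \<ge> 1\<close> by force
next
  assume "\<exists>i\<in>{1..n}. xs = graph_point d f i"
  then obtain i where i: "i \<in> {1..n}" and xs: "xs = graph_point d f i" by blast
  have "xs \<in> positions d n"
    unfolding xs using graph_point_in_positions[OF i maps] .
  then show "perm_matrix d n f xs = 1"
    unfolding perm_matrix_def using \<open>d \<ge> 1\<close> by (simp add: xs graph_point_nth)
qed

lemma perm_matrix_in_Lambda:
  assumes "d \<ge> 1" and bij: "\<And>k. k \<in> {1..<d} \<Longrightarrow> bij_betw (f k) {1..n} {1..n}"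
  shows "perm_matrix d n f \<in> Lambda d n"
proof -
  have maps: "f k ` {1..n} \<subseteq> {1..n}" if "k \<in> {1..<d}" for k
    using bij[OF that] by (simp add: bij_betw_def)
  have "card {xs \<in> hyperplane d n k j. perm_matrix d n f xs = 1} = 1"
    if k: "k < d" and j: "j \<in> {1..n}" for k j
  proof -
    define g where "g i = graph_point d f i ! k" for i
    have bij_g: "bij_betw g {1..n} {1..n}"
      using bij[of k] k
      by (cases "k = 0")
        (auto simp: g_def graph_point_nth bij_betw_def cong: inj_on_cong image_cong)
    moreover have "inv_into {1..n} g j \<in> {1..n}"
      using bij_g j by (metis bij_betw_def inv_into_into)
    ultimately have "{i \<in> {1..n}. g i = j} = {inv_into {1..n} g j}"
      using j by (auto simp: bij_betw_def f_inv_into_f inv_into_f_f)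
    moreover have "{xs \<in> hyperplane d n k j. perm_matrix d n f xs = 1}
        = graph_point d f ` {i \<in> {1..n}. g i = j}"
      using perm_matrix_eq_1_iff[OF \<open>d \<ge> 1\<close> maps] graph_point_in_positions[OF _ maps]
      unfolding hyperplane_def g_def by auto
    ultimately show ?thesis by simp
  qed
  then show ?thesis
    unfolding Lambda_def is_matrix_def perm_matrix_def by auto
qed

definition cyclic_shift :: "nat \<Rightarrow> nat \<Rightarrow> nat \<Rightarrow> nat" where
  "cyclic_shift n t i = (i - 1 + t) mod n + 1"

lemma cyclic_shift_0: "i \<in> {1..n} \<Longrightarrow> cyclic_shift n 0 i = i"
  unfolding cyclic_shift_def by auto

lemma cyclic_shift_in_range: "n > 0 \<Longrightarrow> cyclic_shift n t i \<in> {1..n}"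
  unfolding cyclic_shift_def by (simp add: Suc_leI)

lemma bij_betw_cyclic_shift:
  assumes "n > 0"
  shows "bij_betw (cyclic_shift n t) {1..n} {1..n}"
proof (rule inj_on_card_eq_imp_bij_betw)
  show "inj_on (cyclic_shift n t) {1..n}"
  proof (rule inj_onI)
    fix i j assume "i \<in> {1..n}" "j \<in> {1..n}" "cyclic_shift n t i = cyclic_shift n t j"
    then have "[i - 1 + t = j - 1 + t] (mod n)"
      unfolding cyclic_shift_def cong_def by simp
    then have "[i - 1 = j - 1] (mod n)"
      by (rule cong_add_rcancel_nat[THEN iffD1])
    then have "(i - 1) mod n = (j - 1) mod n"
      unfolding cong_def .
    then show "i = j"
      using \<open>i \<in> {1..n}\<close> \<open>j \<in> {1..n}\<close> by auto
  qed
qed (use cyclic_shift_in_range[OF assms] in auto)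

lemma bij_betw_cyclic_shift_orbit:
  assumes "i \<in> {1..n}"
  shows "bij_betw (\<lambda>t. cyclic_shift n t i) {0..<n} {1..n}"
proof (rule inj_on_card_eq_imp_bij_betw)
  show "inj_on (\<lambda>t. cyclic_shift n t i) {0..<n}"
  proof (rule inj_onI)
    fix s t assume "s \<in> {0..<n}" "t \<in> {0..<n}" "cyclic_shift n s i = cyclic_shift n t i"
    then have "[i - 1 + s = i - 1 + t] (mod n)"
      unfolding cyclic_shift_def cong_def by simp
    then have "[s = t] (mod n)"
      by (rule cong_add_lcancel_nat[THEN iffD1])
    then have "s mod n = t mod n"
      unfolding cong_def .
    then show "s = t"
      using \<open>s \<in> {0..<n}\<close> \<open>t \<in> {0..<n}\<close> by simp
  qed
qed (use assms cyclic_shift_in_range[of n] in auto)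

lemma perm_matrix_cyclic_shift_0:
  assumes "\<And>k. k \<in> {1..<d} \<Longrightarrow> a k = 0"
  shows "perm_matrix d n (\<lambda>k. f k \<circ> cyclic_shift n (a k)) = perm_matrix d n f"
proof
  fix xs
  show "perm_matrix d n (\<lambda>k. f k \<circ> cyclic_shift n (a k)) xs = perm_matrix d n f xs"
  proof (cases "xs \<in> positions d n \<and> d \<ge> 1")
    case True
    then have "xs ! 0 \<in> {1..n}" using nth_in_positions by auto
    then show ?thesis unfolding perm_matrix_def using assms cyclic_shift_0 by auto
  qed (auto simp: perm_matrix_def)
qed

lemma sum_shifted_perm_matrices:
  assumes "d \<ge> 1" and bij: "\<And>k. k \<in> {1..<d} \<Longrightarrow> bij_betw (f k) {1..n} {1..n}"
  shows "(\<Sum>a\<in>PiE {1..<d} (\<lambda>_. {0..<n}). perm_matrix d n (\<lambda>k. f k \<circ> cyclic_shift n (a k)) xs)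
         = J d n xs"
proof (cases "xs \<in> positions d n")
  case True
  have x0: "xs ! 0 \<in> {1..n}" using nth_in_positions[OF True] \<open>d \<ge> 1\<close> by simp
  have one: "(\<Sum>t\<in>{0..<n}. of_bool (xs ! k = f k (cyclic_shift n t (xs ! 0)))) = (1 :: real)"
    if k: "k \<in> {1..<d}" for k
  proof -
    have "bij_betw (\<lambda>t. f k (cyclic_shift n t (xs ! 0))) {0..<n} {1..n}"
      using bij_betw_trans[OF bij_betw_cyclic_shift_orbit[OF x0] bij[OF k]] by (simp add: comp_def)
    then have "(\<Sum>t\<in>{0..<n}. of_bool (xs ! k = f k (cyclic_shift n t (xs ! 0))))
        = (\<Sum>j\<in>{1..n}. of_bool (xs ! k = j) :: real)"
      by (rule sum.reindex_bij_betw)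
    also have "\<dots> = 1"
      using nth_in_positions[OF True] k by (simp add: sum.delta)
    finally show ?thesis .
  qed
  have "(\<Sum>a\<in>PiE {1..<d} (\<lambda>_. {0..<n}). perm_matrix d n (\<lambda>k. f k \<circ> cyclic_shift n (a k)) xs)
      = (\<Sum>a\<in>PiE {1..<d} (\<lambda>_. {0..<n}).
           \<Prod>k\<in>{1..<d}. of_bool (xs ! k = f k (cyclic_shift n (a k) (xs ! 0))))"
    unfolding perm_matrix_def using True by (simp add: of_bool_Ball_eq_prod)
  also have "\<dots> = (\<Prod>k\<in>{1..<d}. \<Sum>t\<in>{0..<n}. of_bool (xs ! k = f k (cyclic_shift n t (xs ! 0))))"
    by (rule prod_sum_PiE[symmetric]) auto
  also have "\<dots> = J d n xs"
    using one True by (simp add: J_def)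
  finally show ?thesis .
qed (simp add: perm_matrix_def J_def)

lemma sum_shifted_perm_matrices_plus_unshifted:
  assumes "d \<ge> 1" "n \<ge> 1" and bij: "\<And>k. k \<in> {1..<d} \<Longrightarrow> bij_betw (f k) {1..n} {1..n}"
  shows "(\<Sum>a\<in>PiE {1..<d} (\<lambda>_. {0..<n}).
            (\<alpha> + (if a = restrict (\<lambda>_. 0) {1..<d} then \<beta> else 0))
            * perm_matrix d n (\<lambda>k. f k \<circ> cyclic_shift n (a k)) xs)
         = \<alpha> * J d n xs + \<beta> * perm_matrix d n f xs"
proof -
  let ?Sh = "PiE {1..<d} (\<lambda>_. {0..<n})" and ?z = "restrict (\<lambda>_. 0) {1..<d}"
  let ?M = "\<lambda>a. perm_matrix d n (\<lambda>k. f k \<circ> cyclic_shift n (a k)) xs"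
  have "(\<Sum>a\<in>?Sh. (\<alpha> + (if a = ?z then \<beta> else 0)) * ?M a)
      = (\<Sum>a\<in>?Sh. \<alpha> * ?M a + (if a = ?z then \<beta> * ?M a else 0))"
    by (intro sum.cong) (auto simp: distrib_right)
  also have "\<dots> = \<alpha> * (\<Sum>a\<in>?Sh. ?M a) + \<beta> * ?M ?z"
    using \<open>n \<ge> 1\<close> by (simp add: sum.distrib sum_distrib_left sum.delta finite_PiE)
  also have "?M ?z = perm_matrix d n f xs"
    by (subst perm_matrix_cyclic_shift_0) auto
  also have "(\<Sum>a\<in>?Sh. ?M a) = J d n xs"
    by (rule sum_shifted_perm_matrices[OF \<open>d \<ge> 1\<close>]) (rule bij)
  finally show ?thesis .
qed

lemma Hull_uniform_plus_perm_combination: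
  fixes c :: "'q \<Rightarrow> real" and F :: "'q \<Rightarrow> nat \<Rightarrow> nat \<Rightarrow> nat"
  assumes "d \<ge> 1" "n \<ge> 1" "finite Q" "Q \<noteq> {}"
    and bij: "\<And>q k. q \<in> Q \<Longrightarrow> k \<in> {1..<d} \<Longrightarrow> bij_betw (F q k) {1..n} {1..n}"
    and sum_c: "(\<Sum>q\<in>Q. c q) = 0"
    and small: "\<And>q. q \<in> Q \<Longrightarrow> card Q * \<bar>c q\<bar> \<le> 1 / real n ^ (d - 1)"
  shows "(\<lambda>xs. J d n xs / real n ^ (d - 1) + (\<Sum>q\<in>Q. c q * perm_matrix d n (F q) xs))
         \<in> Hull (Lambda d n)"
proof -
  define u where "u = 1 / real n ^ (d - 1)"
  define Sh where "Sh = PiE {1..<d} (\<lambda>_. {0..<n})"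
  define w where
    "w = (\<lambda>(q, a). u / card Q + (if a = restrict (\<lambda>_. 0::nat) {1..<d} then c q else 0))"
  define L where "L = (\<lambda>(q, a). perm_matrix d n (\<lambda>k. F q k \<circ> cyclic_shift n (a k)))"
  have "finite Sh" unfolding Sh_def by (simp add: finite_PiE)
  have "w p \<ge> 0" if "p \<in> Q \<times> Sh" for p
  proof -
    have "card Q > 0" using that \<open>finite Q\<close> card_gt_0_iff by blast
    moreover have "card Q * \<bar>c (fst p)\<bar> \<le> u"
      using small[of "fst p"] that unfolding u_def by auto
    ultimately have "\<bar>c (fst p)\<bar> \<le> u / card Q"
      by (simp add: pos_le_divide_eq mult.commute)
    moreover have "u \<ge> 0" unfolding u_def by simp
    ultimately show ?thesis unfolding w_def by (auto split: prod.split)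
  qed
  moreover have "(\<Sum>p\<in>Q \<times> Sh. w p) = 1"
  proof -
    have "(\<Sum>p\<in>Q \<times> Sh. w p) = (\<Sum>q\<in>Q. card Sh * (u / card Q) + c q)"
      unfolding sum.cartesian_product[symmetric] w_def Sh_def using \<open>n \<ge> 1\<close>
      by (simp add: sum.distrib sum.delta finite_PiE)
    also have "\<dots> = 1"
      using \<open>Q \<noteq> {}\<close> \<open>finite Q\<close> \<open>n \<ge> 1\<close> sum_c unfolding Sh_def u_def
      by (simp add: sum.distrib card_PiE)
    finally show ?thesis .
  qed
  moreover have "L p \<in> Lambda d n" if "p \<in> Q \<times> Sh" for p
    using that \<open>d \<ge> 1\<close> \<open>n \<ge> 1\<close> unfolding L_def Sh_def
    by (auto intro!: perm_matrix_in_Lambda bij_betw_trans[OF bij_betw_cyclic_shift bij])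
  moreover have "(\<Sum>p\<in>Q \<times> Sh. w p * L p xs)
      = J d n xs / real n ^ (d - 1) + (\<Sum>q\<in>Q. c q * perm_matrix d n (F q) xs)" for xs
  proof -
    have "(\<Sum>p\<in>Q \<times> Sh. w p * L p xs) = (\<Sum>q\<in>Q. \<Sum>a\<in>Sh. w (q, a) * L (q, a) xs)"
      unfolding sum.cartesian_product by (intro sum.cong) auto
    also have "\<dots> = (\<Sum>q\<in>Q. u / card Q * J d n xs + c q * perm_matrix d n (F q) xs)"
    proof (intro sum.cong refl)
      fix q assume "q \<in> Q"
      then show "(\<Sum>a\<in>Sh. w (q, a) * L (q, a) xs)
          = u / card Q * J d n xs + c q * perm_matrix d n (F q) xs"
        unfolding w_def L_def Sh_def
        using sum_shifted_perm_matrices_plus_unshifted[of d n "F q"] assms(1,2) bij by simp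
    qed
    also have "\<dots> = J d n xs / real n ^ (d - 1) + (\<Sum>q\<in>Q. c q * perm_matrix d n (F q) xs)"
      using \<open>Q \<noteq> {}\<close> \<open>finite Q\<close> unfolding u_def by (simp add: sum.distrib)
    finally show ?thesis .
  qed
  ultimately show ?thesis
    using Hull_finite_combination[of "Q \<times> Sh" w L "Lambda d n"] \<open>finite Q\<close> \<open>finite Sh\<close> by auto
qed

section \<open>The checkerboard perturbation\<close>

definition checker_vec :: "nat \<Rightarrow> real" where
  "checker_vec i = (if i = 1 then 1 else if i = 2 then -1 else 0)"

(* In the decomposition of the checkerboard, flat_vec replaces checker_vec as the weight of
   the first coordinate in the factors k >= 2: it is 1 on {1, 2}, so the product of the weights
   is checker_vec, and it has zero sum, so flat_vec i * checker_vec j is still a combination of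
   permutation matrices with coefficient sum 0. *)
definition flat_vec :: "nat \<Rightarrow> real" where
  "flat_vec i = (if i = 1 \<or> i = 2 then 1 else if i = 3 then -2 else 0)"

definition checkerboard :: "nat \<Rightarrow> nat list \<Rightarrow> real" where
  "checkerboard d xs = (\<Prod>k<d. checker_vec (xs ! k))"

definition small_perm :: "nat \<Rightarrow> nat \<Rightarrow> nat" where
  "small_perm r i =
    (if r = 1 then (if i = 1 then 2 else if i = 2 then 1 else i)
     else if r = 2 then (if i = 2 then 3 else if i = 3 then 2 else i)
     else if r = 3 then (if i = 1 then 2 else if i = 2 then 3 else if i = 3 then 1 else i)
     else i)"

definition small_perm_coeff :: "nat \<Rightarrow> nat \<Rightarrow> real" where
  "small_perm_coeff k r =
    (if k = 1 then (if r = 0 then 1 else if r = 1 then -1 else 0)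
     else (if r = 0 then -1 else if r = 1 then 1 else if r = 2 then 2 else -2))"

definition tuple_coeff :: "nat \<Rightarrow> (nat \<Rightarrow> nat) \<Rightarrow> real" where
  "tuple_coeff d q = (\<Prod>k\<in>{1..<d}. small_perm_coeff k (q k))"

lemma bij_betw_small_perm:
  assumes "n \<ge> 3" "r < 4"
  shows "bij_betw (small_perm r) {1..n} {1..n}"
proof -
  have into: "small_perm r ` {1..n} \<subseteq> {1..n}"
    using assms unfolding small_perm_def by auto
  have "r = 0 \<or> r = 1 \<or> r = 2 \<or> r = 3" using assms by auto
  then have inj: "inj_on (small_perm r) {1..n}"
    by (elim disjE; auto simp: inj_on_def small_perm_def split: if_splits)
  show ?thesis
    using endo_inj_surj[OF finite_atLeastAtMost into inj] inj by (simp add: bij_betw_def)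
qed

lemma sum_small_perm_coeff:
  "(\<Sum>r<4. small_perm_coeff k r * of_bool (j = small_perm r i))
   = (if k = 1 then checker_vec i else flat_vec i) * checker_vec j"
proof -
  have "i \<in> {1, 2, 3} \<or> i \<notin> {1, 2, 3}" "j \<in> {1, 2, 3} \<or> j \<notin> {1, 2, 3}" by auto
  then show ?thesis
    by (auto simp: numeral_eq_Suc small_perm_def small_perm_coeff_def checker_vec_def flat_vec_def)
qed

lemma sum_tuple_coeff_eq_0:
  assumes "d \<ge> 2"
  shows "(\<Sum>q\<in>PiE {1..<d} (\<lambda>_. {..<4}). tuple_coeff d q) = 0"
proof -
  have "(\<Sum>q\<in>PiE {1..<d} (\<lambda>_. {..<4}). tuple_coeff d q) = (\<Prod>k\<in>{1..<d}. \<Sum>r<4. small_perm_coeff k r)"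
    unfolding tuple_coeff_def by (rule prod_sum_PiE[symmetric]) auto
  also have "\<dots> = 0"
    using assms by (intro prod_zero bexI[of _ 1]) (auto simp: numeral_eq_Suc small_perm_coeff_def)
  finally show ?thesis .
qed

lemma abs_tuple_coeff_le:
  assumes "q \<in> PiE {1..<d} (\<lambda>_. {..<4})"
  shows "\<bar>tuple_coeff d q\<bar> \<le> 2 ^ (d - 1)"
proof -
  have "\<bar>tuple_coeff d q\<bar> = (\<Prod>k\<in>{1..<d}. \<bar>small_perm_coeff k (q k)\<bar>)"
    unfolding tuple_coeff_def by (simp add: abs_prod)
  also have "\<dots> \<le> (\<Prod>k\<in>{1..<d}. 2)"
    by (intro prod_mono) (auto simp: small_perm_coeff_def)
  finally show ?thesis by simp
qed

lemma checkerboard_eq_sum_perm_matrices: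
  assumes "xs \<in> positions d n" and "d \<ge> 2"
  shows "(\<Sum>q\<in>PiE {1..<d} (\<lambda>_. {..<4}). tuple_coeff d q * perm_matrix d n (\<lambda>k. small_perm (q k)) xs)
         = checkerboard d xs"
proof -
  let ?w = "\<lambda>k. if k = 1 then checker_vec (xs ! 0) else flat_vec (xs ! 0)"
  have "(\<Sum>q\<in>PiE {1..<d} (\<lambda>_. {..<4}). tuple_coeff d q * perm_matrix d n (\<lambda>k. small_perm (q k)) xs)
      = (\<Sum>q\<in>PiE {1..<d} (\<lambda>_. {..<4}).
           \<Prod>k\<in>{1..<d}. small_perm_coeff k (q k) * of_bool (xs ! k = small_perm (q k) (xs ! 0)))"
    unfolding tuple_coeff_def perm_matrix_def using assms(1)
    by (simp add: of_bool_Ball_eq_prod prod.distrib)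
  also have "\<dots> = (\<Prod>k\<in>{1..<d}.
      \<Sum>r<4. small_perm_coeff k r * of_bool (xs ! k = small_perm r (xs ! 0)))"
    by (rule prod_sum_PiE[symmetric]) auto
  also have "\<dots> = (\<Prod>k\<in>{1..<d}. ?w k) * (\<Prod>k\<in>{1..<d}. checker_vec (xs ! k))"
    by (simp add: sum_small_perm_coeff prod.distrib)
  also have "(\<Prod>k\<in>{1..<d}. ?w k) = checker_vec (xs ! 0)"
  proof (cases "xs ! 0 \<in> {1, 2}")
    case True
    then have "(\<Prod>k\<in>{1..<d}. ?w k) = (\<Prod>k\<in>{1..<d}. if k = 1 then checker_vec (xs ! 0) else 1)"
      by (intro prod.cong) (auto simp: flat_vec_def)
    then show ?thesis using assms(2) by (simp add: prod.delta)
  next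
    case False
    then have "checker_vec (xs ! 0) = 0" by (auto simp: checker_vec_def)
    moreover have "1 \<in> {1..<d}" using assms(2) by simp
    ultimately show ?thesis by (force simp: prod_zero_iff)
  qed
  also have "checker_vec (xs ! 0) * (\<Prod>k\<in>{1..<d}. checker_vec (xs ! k)) = checkerboard d xs"
    using assms(2) unfolding checkerboard_def lessThan_atLeast0
    by (simp add: prod.atLeast_Suc_lessThan)
  finally show ?thesis .
qed

lemma checkerboard_nonzero_iff: "checkerboard d x \<noteq> 0 \<longleftrightarrow> (\<forall>k<d. x ! k \<in> {1, 2})"
  unfolding checkerboard_def by (auto simp: checker_vec_def)

lemma power2_checkerboard:
  assumes "checkerboard d x \<noteq> 0"
  shows "(checkerboard d x)\<^sup>2 = 1"
proof -
  have "(checkerboard d x)\<^sup>2 = (\<Prod>k<d. (checker_vec (x ! k))\<^sup>2)"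
    unfolding checkerboard_def by (simp add: prod_power_distrib)
  also have "\<dots> = 1"
    using assms unfolding checkerboard_nonzero_iff
    by (intro prod.neutral) (auto simp: checker_vec_def)
  finally show ?thesis .
qed

lemma checkerboard_antipodal:
  assumes "odd d" "checkerboard d x \<noteq> 0" "checkerboard d y \<noteq> 0" "\<And>k. k < d \<Longrightarrow> x ! k \<noteq> y ! k"
  shows "checkerboard d y = - checkerboard d x"
proof -
  have "checkerboard d y = (\<Prod>k<d. - checker_vec (x ! k))"
    unfolding checkerboard_def
  proof (intro prod.cong refl)
    fix k assume "k \<in> {..<d}"
    then have "x ! k \<in> {1, 2}" "y ! k \<in> {1, 2}" "x ! k \<noteq> y ! k"
      using assms(2-4) unfolding checkerboard_nonzero_iff by auto
    then show "checker_vec (y ! k) = - checker_vec (x ! k)"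
      by (auto simp: checker_vec_def)
  qed
  also have "\<dots> = - checkerboard d x"
    unfolding checkerboard_def prod_uminus using assms(1) by simp
  finally show ?thesis .
qed

lemma Hull_uniform_plus_checkerboard:
  assumes "d \<ge> 2" "n \<ge> 3" "\<bar>\<epsilon>\<bar> \<le> 1 / (8 * real n) ^ (d - 1)"
  shows "(\<lambda>xs. (1 / real n ^ (d - 1) + \<epsilon> * checkerboard d xs) * J d n xs) \<in> Hull (Lambda d n)"
proof -
  define T where "T = PiE {1..<d} (\<lambda>_. {..<4::nat})"
  have small: "card T * \<bar>\<epsilon> * tuple_coeff d q\<bar> \<le> 1 / real n ^ (d - 1)" if "q \<in> T" for q
  proof -
    have "\<bar>\<epsilon> * tuple_coeff d q\<bar> \<le> 1 / (8 * real n) ^ (d - 1) * 2 ^ (d - 1)"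
      unfolding abs_mult using that assms(3) abs_tuple_coeff_le[of q d] unfolding T_def
      by (intro mult_mono) auto
    then have "card T * \<bar>\<epsilon> * tuple_coeff d q\<bar> \<le> card T * (1 / (8 * real n) ^ (d - 1) * 2 ^ (d - 1))"
      by (rule mult_left_mono) simp
    also have "\<dots> = 1 / real n ^ (d - 1)"
    proof -
      have "(8::real) ^ (d - 1) = 4 ^ (d - 1) * 2 ^ (d - 1)"
        by (simp flip: power_mult_distrib)
      then show ?thesis unfolding T_def by (simp add: card_PiE power_mult_distrib)
    qed
    finally show ?thesis .
  qed
  have sum_0: "(\<Sum>q\<in>T. \<epsilon> * tuple_coeff d q) = 0"
    unfolding T_def using sum_tuple_coeff_eq_0[OF assms(1)]
    by (simp add: sum_distrib_left[symmetric])
  have bij: "bij_betw (small_perm (q k)) {1..n} {1..n}" if "q \<in> T" "k \<in> {1..<d}" for q k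
    using that assms(2) unfolding T_def by (intro bij_betw_small_perm) auto
  have T: "finite T" "T \<noteq> {}"
    unfolding T_def by (auto simp: finite_PiE PiE_eq_empty_iff lessThan_empty_iff)
  have "(\<lambda>xs. J d n xs / real n ^ (d - 1)
      + (\<Sum>q\<in>T. \<epsilon> * tuple_coeff d q * perm_matrix d n (\<lambda>k. small_perm (q k)) xs)) \<in> Hull (Lambda d n)"
    using assms(1,2) by (intro Hull_uniform_plus_perm_combination T bij sum_0 small) auto
  also have "(\<lambda>xs. J d n xs / real n ^ (d - 1)
      + (\<Sum>q\<in>T. \<epsilon> * tuple_coeff d q * perm_matrix d n (\<lambda>k. small_perm (q k)) xs))
      = (\<lambda>xs. (1 / real n ^ (d - 1) + \<epsilon> * checkerboard d xs) * J d n xs)"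
  proof
    fix xs
    show "J d n xs / real n ^ (d - 1)
        + (\<Sum>q\<in>T. \<epsilon> * tuple_coeff d q * perm_matrix d n (\<lambda>k. small_perm (q k)) xs)
        = (1 / real n ^ (d - 1) + \<epsilon> * checkerboard d xs) * J d n xs"
      using checkerboard_eq_sum_perm_matrices[of xs d n] assms(1)
      by (cases "xs \<in> positions d n")
        (simp_all add: J_def T_def perm_matrix_def mult.assoc flip: sum_distrib_left)
  qed
  finally show ?thesis .
qed

section \<open>Diagonals and the permanent\<close>

lemma finite_diagonals: "finite (diagonals d n)"
proof -
  have "diagonals d n \<subseteq> Pow (positions d n)"
    unfolding diagonals_def by auto
  then show ?thesis
    using finite_positions by (meson finite_Pow_iff finite_subset)
qed

lemma bij_betw_first_coord_diagonal:
  assumes "D \<in> diagonals d n" "d \<ge> 1"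
  shows "bij_betw (\<lambda>x. x ! 0) D {1..n}"
proof -
  have sub: "D \<subseteq> positions d n" and "card D = n"
    and dif: "\<And>x y. x \<in> D \<Longrightarrow> y \<in> D \<Longrightarrow> x \<noteq> y \<Longrightarrow> x ! 0 \<noteq> y ! 0"
    using assms unfolding diagonals_def by auto
  have "inj_on (\<lambda>x. x ! 0) D"
    using dif by (meson inj_onI)
  moreover have "(\<lambda>x. x ! 0) ` D \<subseteq> {1..n}"
    using sub nth_in_positions assms(2) by fastforce
  ultimately show ?thesis
    using \<open>card D = n\<close> by (intro inj_on_card_eq_imp_bij_betw) auto
qed

definition diagonal_perm :: "nat \<Rightarrow> nat list set \<Rightarrow> nat \<Rightarrow> nat \<Rightarrow> nat" where
  "diagonal_perm n D k i = (if i \<in> {1..n} then the_inv_into D (\<lambda>x. x ! 0) i ! k else i)"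

lemma diagonal_perm_nth:
  assumes "D \<in> diagonals d n" "d \<ge> 1" "x \<in> D"
  shows "diagonal_perm n D k (x ! 0) = x ! k"
proof -
  have bij: "bij_betw (\<lambda>x. x ! 0) D {1..n}"
    using bij_betw_first_coord_diagonal[OF assms(1,2)] .
  then have "x ! 0 \<in> {1..n}"
    using assms(3) by (auto dest: bij_betwE)
  then show ?thesis
    using the_inv_into_f_f[of "\<lambda>x. x ! 0" D x] bij assms(3)
    unfolding diagonal_perm_def by (simp add: bij_betw_def)
qed

lemma diagonal_perm_permutes:
  assumes D: "D \<in> diagonals d n" and "d \<ge> 1" "k < d"
  shows "diagonal_perm n D k permutes {1..n}"
proof (rule bij_imp_permutes)
  have point: "\<exists>x\<in>D. x ! 0 = i" if "i \<in> {1..n}" for i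
  proof -
    have "i \<in> (\<lambda>x. x ! 0) ` D"
      using bij_betw_first_coord_diagonal[OF D \<open>d \<ge> 1\<close>] that by (simp add: bij_betw_def)
    then show ?thesis by auto
  qed
  have dif: "\<And>x y. x \<in> D \<Longrightarrow> y \<in> D \<Longrightarrow> x ! k = y ! k \<Longrightarrow> x = y"
    using D \<open>k < d\<close> unfolding diagonals_def by blast
  show "bij_betw (diagonal_perm n D k) {1..n} {1..n}"
  proof (rule inj_on_card_eq_imp_bij_betw)
    show "inj_on (diagonal_perm n D k) {1..n}"
    proof (rule inj_onI)
      fix i j assume "i \<in> {1..n}" "j \<in> {1..n}" "diagonal_perm n D k i = diagonal_perm n D k j"
      then show "i = j"
        using point dif diagonal_perm_nth[OF D \<open>d \<ge> 1\<close>] by metis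
    qed
    show "diagonal_perm n D k ` {1..n} \<subseteq> {1..n}"
    proof
      fix j assume "j \<in> diagonal_perm n D k ` {1..n}"
      then obtain x where "x \<in> D" "j = x ! k"
        using point diagonal_perm_nth[OF D \<open>d \<ge> 1\<close>] by blast
      then show "j \<in> {1..n}"
        using D \<open>k < d\<close> nth_in_positions unfolding diagonals_def by blast
    qed
  qed auto
qed (auto simp: diagonal_perm_def)

lemma diagonals_eqI:
  assumes "D \<in> diagonals d n" "D' \<in> diagonals d n" "d \<ge> 1"
    and "\<And>k. k \<in> {1..<d} \<Longrightarrow> diagonal_perm n D k = diagonal_perm n D' k"
  shows "D = D'"
proof -
  have "D1 \<subseteq> D2" if D1: "D1 \<in> diagonals d n" and D2: "D2 \<in> diagonals d n"
    and same: "\<And>k. k \<in> {1..<d} \<Longrightarrow> diagonal_perm n D1 k = diagonal_perm n D2 k" for D1 D2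
  proof
    fix x assume "x \<in> D1"
    then have x: "x \<in> positions d n"
      using D1 unfolding diagonals_def by auto
    then obtain y where y: "y \<in> D2" "y ! 0 = x ! 0"
      using bij_betw_first_coord_diagonal[OF D2 \<open>d \<ge> 1\<close>] nth_in_positions[OF x] \<open>d \<ge> 1\<close>
      by (metis bij_betw_iff_bijections less_le_trans zero_less_one)
    have "x ! k = y ! k" if "k < d" for k
      using that same[of k] y diagonal_perm_nth[OF D1 \<open>d \<ge> 1\<close> \<open>x \<in> D1\<close>, of k]
        diagonal_perm_nth[OF D2 \<open>d \<ge> 1\<close> \<open>y \<in> D2\<close>, of k]
      by (cases "k = 0") auto
    moreover have "y \<in> positions d n"
      using D2 y unfolding diagonals_def by auto
    ultimately have "x = y"
      using x by (intro nth_equalityI) (auto simp: positions_def)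
    then show "x \<in> D2" using y by simp
  qed
  then show ?thesis
    using assms by (metis subset_antisym)
qed

lemma card_diagonals_le:
  assumes "d \<ge> 1"
  shows "card (diagonals d n) \<le> fact n ^ (d - 1)"
proof -
  let ?P = "PiE {1..<d} (\<lambda>_. {p. p permutes {1..n}})"
  have "inj_on (\<lambda>D. restrict (diagonal_perm n D) {1..<d}) (diagonals d n)"
    by (rule inj_onI) (metis diagonals_eqI assms restrict_apply')
  moreover have "(\<lambda>D. restrict (diagonal_perm n D) {1..<d}) ` diagonals d n \<subseteq> ?P"
    using diagonal_perm_permutes assms by auto
  moreover have "finite ?P"
    by (simp add: finite_PiE finite_permutations)
  ultimately have "card (diagonals d n) \<le> card ?P"
    by (rule card_inj_on_le)
  also have "card ?P = fact n ^ (d - 1)"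
    by (simp add: card_PiE card_permutations)
  finally show ?thesis .
qed

lemma card_checkerboard_support_le_2:
  assumes "D \<in> diagonals d n" "d \<ge> 1"
  shows "card {x \<in> D. checkerboard d x \<noteq> 0} \<le> 2"
proof -
  let ?K = "{x \<in> D. checkerboard d x \<noteq> 0}"
  have "inj_on (\<lambda>x. x ! 0) ?K"
    using bij_betw_first_coord_diagonal[OF assms] by (auto simp: bij_betw_def inj_on_def)
  then have "card ?K = card ((\<lambda>x. x ! 0) ` ?K)"
    by (simp add: card_image)
  also have "\<dots> \<le> card {1::nat, 2}"
    using assms(2) checkerboard_nonzero_iff by (intro card_mono) auto
  finally show ?thesis by simp
qed

lemma prod_add_split_support:
  fixes e :: "'a \<Rightarrow> real"
  assumes "finite D"
  shows "(\<Prod>x\<in>D. u + \<epsilon> * e x)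
         = u ^ (card D - card {x \<in> D. e x \<noteq> 0}) * (\<Prod>x\<in>{x \<in> D. e x \<noteq> 0}. u + \<epsilon> * e x)"
proof -
  let ?K = "{x \<in> D. e x \<noteq> 0}"
  have "(\<Prod>x\<in>D. u + \<epsilon> * e x) = (\<Prod>x\<in>D - ?K. u + \<epsilon> * e x) * (\<Prod>x\<in>?K. u + \<epsilon> * e x)"
    by (rule prod.subset_diff) (use assms in auto)
  also have "(\<Prod>x\<in>D - ?K. u + \<epsilon> * e x) = (\<Prod>x\<in>D - ?K. u)"
    by (intro prod.cong) auto
  also have "\<dots> = u ^ (card D - card ?K)"
    using assms by (simp add: card_Diff_subset)
  finally show ?thesis .
qed

lemma prod_perturbed_diagonal:
  fixes u \<epsilon> :: real
  assumes D: "D \<in> diagonals d n" and "odd d" "n \<ge> 2"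
  shows "(\<Prod>x\<in>D. u + \<epsilon> * checkerboard d x)
         = u ^ n + \<epsilon> * u ^ (n - 1) * (\<Sum>x\<in>D. checkerboard d x)
           - (if card {x \<in> D. checkerboard d x \<noteq> 0} = 2 then \<epsilon>\<^sup>2 * u ^ (n - 2) else 0)"
proof -
  let ?K = "{x \<in> D. checkerboard d x \<noteq> 0}"
  have "d \<ge> 1" using \<open>odd d\<close> by presburger
  have "finite D" "card D = n"
    using D finite_positions finite_subset unfolding diagonals_def by auto
  have prod_D: "(\<Prod>x\<in>D. u + \<epsilon> * checkerboard d x)
      = u ^ (n - card ?K) * (\<Prod>x\<in>?K. u + \<epsilon> * checkerboard d x)"
    using prod_add_split_support[OF \<open>finite D\<close>] \<open>card D = n\<close> by simp
  have sum_D: "(\<Sum>x\<in>D. checkerboard d x) = (\<Sum>x\<in>?K. checkerboard d x)"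
    using \<open>finite D\<close> by (intro sum.mono_neutral_right) auto
  have "card ?K \<in> {0, 1, 2}"
    using card_checkerboard_support_le_2[OF D \<open>d \<ge> 1\<close>] by auto
  then consider "?K = {}" | x where "?K = {x}" | x y where "?K = {x, y}" "x \<noteq> y"
    using \<open>finite D\<close> by (auto simp: card_1_singleton_iff card_2_iff)
  then show ?thesis
  proof cases
    case 1
    then show ?thesis using prod_D sum_D unfolding 1 by simp
  next
    case (2 x)
    then show ?thesis
      using prod_D sum_D \<open>n \<ge> 2\<close> unfolding 2 by (simp add: algebra_simps power_eq_if)
  next
    case (3 x y)
    then have "x \<in> D" "y \<in> D" "checkerboard d x \<noteq> 0" "checkerboard d y \<noteq> 0" by auto
    then have "checkerboard d y = - checkerboard d x"
      using checkerboard_antipodal[OF \<open>odd d\<close>] D \<open>x \<noteq> y\<close> unfolding diagonals_def by blast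
    moreover have "(checkerboard d x)\<^sup>2 = 1"
      using power2_checkerboard \<open>checkerboard d x \<noteq> 0\<close> .
    moreover have "u ^ n = u ^ (n - 2) * u\<^sup>2"
      using \<open>n \<ge> 2\<close> by (metis le_add_diff_inverse2 power_add)
    ultimately show ?thesis
      using prod_D sum_D \<open>x \<noteq> y\<close> unfolding 3(1)
      by (simp add: algebra_simps power2_eq_square numeral_2_eq_2)
  qed
qed

lemma main_diagonal_in_diagonals:
  assumes "d \<ge> 1"
  shows "(\<lambda>i. replicate d i) ` {1..n} \<in> diagonals d n"
proof -
  have "inj_on (\<lambda>i. replicate d i) {1..n}"
    using assms by (intro inj_onI) (simp add: replicate_eq_replicate)
  then show ?thesis
    unfolding diagonals_def positions_def by (auto simp: card_image)
qed

lemma card_checkerboard_support_main_diagonal: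
  assumes "d \<ge> 1" "n \<ge> 2"
  shows "card {x \<in> (\<lambda>i. replicate d i) ` {1..n}. checkerboard d x \<noteq> 0} = 2"
proof -
  have "{x \<in> (\<lambda>i. replicate d i) ` {1..n}. checkerboard d x \<noteq> 0} = {replicate d 1, replicate d 2}"
    using assms by (auto simp: checkerboard_nonzero_iff)
  moreover have "replicate d (1::nat) \<noteq> replicate d 2"
    using assms by (simp add: replicate_eq_replicate)
  ultimately show ?thesis by simp
qed

lemma Per_perturbed_uniform_lt:
  fixes A :: "nat list \<Rightarrow> real" and u \<epsilon> :: real
  assumes "odd d" "n \<ge> 2" "u > 0" "\<epsilon> \<noteq> 0"
    and sign: "\<epsilon> * (\<Sum>D\<in>diagonals d n. \<Sum>x\<in>D. checkerboard d x) \<le> 0"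
    and A: "\<And>x. x \<in> positions d n \<Longrightarrow> A x = u + \<epsilon> * checkerboard d x"
  shows "Per d n A < card (diagonals d n) * u ^ n"
proof -
  define S where "S = (\<Sum>D\<in>diagonals d n. \<Sum>x\<in>D. checkerboard d x)"
  define C where "C D = (if card {x \<in> D. checkerboard d x \<noteq> 0} = 2 then \<epsilon>\<^sup>2 * u ^ (n - 2) else 0)"
    for D :: "nat list set"
  have "d \<ge> 1" using \<open>odd d\<close> by presburger
  have "Per d n A = (\<Sum>D\<in>diagonals d n. \<Prod>x\<in>D. u + \<epsilon> * checkerboard d x)"
    unfolding Per_def using A by (intro sum.cong prod.cong) (auto simp: diagonals_def)
  also have "\<dots> = (\<Sum>D\<in>diagonals d n. u ^ n + \<epsilon> * u ^ (n - 1) * (\<Sum>x\<in>D. checkerboard d x) - C D)"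
    unfolding C_def using prod_perturbed_diagonal assms(1,2) by (intro sum.cong) auto
  also have "\<dots> = card (diagonals d n) * u ^ n + u ^ (n - 1) * (\<epsilon> * S) - (\<Sum>D\<in>diagonals d n. C D)"
    unfolding S_def
    by (simp only: sum.distrib sum_subtractf flip: sum_distrib_left) (simp add: mult_ac)
  also have "\<dots> < card (diagonals d n) * u ^ n"
  proof -
    let ?D0 = "(\<lambda>i. replicate d i) ` {1..n}"
    have "0 < C ?D0"
      unfolding C_def using card_checkerboard_support_main_diagonal \<open>d \<ge> 1\<close> assms(2-4) by simp
    also have "C ?D0 \<le> (\<Sum>D\<in>diagonals d n. C D)"
      using main_diagonal_in_diagonals[OF \<open>d \<ge> 1\<close>] \<open>u > 0\<close>
      by (intro member_le_sum finite_diagonals) (auto simp: C_def)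
    finally have "0 < (\<Sum>D\<in>diagonals d n. C D)" .
    moreover have "u ^ (n - 1) * (\<epsilon> * S) \<le> 0"
      using sign \<open>u > 0\<close> unfolding S_def by (simp add: mult_nonneg_nonpos)
    ultimately show ?thesis by linarith
  qed
  finally show ?thesis .
qed

theorem theorem3p8:
  fixes d n :: nat
  assumes "d \<ge> 3" and "odd d" and "n > 2"
  shows "\<exists>A\<in>Hull (Lambda d n).
           Per d n A < (fact n / real n ^ n) ^ (d - 1) \<or>
           (Per d n A = (fact n / real n ^ n) ^ (d - 1) \<and>
            A \<noteq> (\<lambda>xs. (1 / real n ^ (d - 1)) * J d n xs))"
proof -
  define u :: real where "u = 1 / real n ^ (d - 1)"
  define S where "S = (\<Sum>D\<in>diagonals d n. \<Sum>x\<in>D. checkerboard d x)"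
  define \<epsilon> :: real where "\<epsilon> = (if S \<le> 0 then 1 else -1) / (8 * real n) ^ (d - 1)"
  define A where "A = (\<lambda>xs. (u + \<epsilon> * checkerboard d xs) * J d n xs)"
  have hull: "A \<in> Hull (Lambda d n)"
    unfolding A_def u_def using assms by (intro Hull_uniform_plus_checkerboard) (auto simp: \<epsilon>_def)
  have "Per d n A < card (diagonals d n) * u ^ n"
  proof (rule Per_perturbed_uniform_lt[where \<epsilon> = \<epsilon>])
    show "\<epsilon> * (\<Sum>D\<in>diagonals d n. \<Sum>x\<in>D. checkerboard d x) \<le> 0"
      unfolding S_def[symmetric] using assms
      by (auto simp: \<epsilon>_def mult_le_0_iff intro!: divide_nonpos_pos)
  qed (use assms in \<open>auto simp: u_def \<epsilon>_def A_def J_def\<close>)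
  also have "\<dots> \<le> fact n ^ (d - 1) * u ^ n"
  proof -
    have "real (card (diagonals d n)) \<le> real (fact n ^ (d - 1))"
      using card_diagonals_le[of d n] assms(1) by (simp only: of_nat_le_iff)
    then show ?thesis
      unfolding u_def by (intro mult_right_mono) auto
  qed
  also have "\<dots> = (fact n / real n ^ n) ^ (d - 1)"
    unfolding u_def by (simp add: power_divide flip: power_mult mult.commute)
  finally show ?thesis
    using hull by blast
qed

end
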